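(* Let $d=4k$ with $k>1$, $n=d/2$, $\omega=e^{2\pi i/d}$, and $F_d=(\omega^{jl})_{j,l=0}^{d-1}$ the Fourier matrix. For $\vec\alpha=(\alpha_1,\dots,\alpha_{n-1})\in\mathbb{R}^{n-1}$ define the real $d\times d$ matrix $R_1(\vec\alpha)$ by $R_1(\vec\alpha)_{j,l}=0$ if $j$ is even, $R_1(\vec\alpha)_{j,l}=0$ if $j$ is odd and $l\equiv0\pmod n$, and $R_1(\vec\alpha)_{j,l}=\alpha_{(l\bmod n)}$ otherwise (where $l\bmod n\in\{1,\dots,n-1\}$), and set $R_2(\vec\beta)=R_1(\vec\beta)^t$. Then for all $\vec\alpha,\vec\beta\in\mathbb{R}^{n-1}$ the matrices $F_d\circ\exp\big(i(R_1(\vec\alpha)+R_2(\vec\beta))\big)$ and $F_d\circ\exp\big(i(R_1(\vec\alpha)+R_2(\vec\beta))^t\big)$ are complex Hadamard matrices.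
   Context: A $d\times d$ complex Hadamard matrix has unimodular entries and pairwise orthogonal columns. $\circ$ denotes the entrywise product and $\exp(iR)$ the entrywise exponential $(\exp(iR))_{jl}=e^{iR_{jl}}$; rows and columns are indexed $0,\dots,d-1$. *)

theory Defs
  imports Complex_Main
begin

text \<open>Square d x d complex matrices are represented as functions
  nat \<Rightarrow> nat \<Rightarrow> complex; only entries with indices 0..d-1 matter.\<close>

definition complex_hadamard :: "nat \<Rightarrow> (nat \<Rightarrow> nat \<Rightarrow> complex) \<Rightarrow> bool" where
  "complex_hadamard d H \<longleftrightarrow>
     (\<forall>j<d. \<forall>l<d. norm (H j l) = 1) \<and>
     (\<forall>l<d. \<forall>l'<d. l \<noteq> l' \<longrightarrow> (\<Sum>j<d. H j l * cnj (H j l')) = 0)"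

definition fourier_matrix :: "nat \<Rightarrow> nat \<Rightarrow> nat \<Rightarrow> complex" where
  "fourier_matrix d j l = (exp (2 * pi * \<i> / of_nat d)) ^ (j * l)"

text \<open>R_1(alpha) for parameter n = d/2; alpha is indexed 1..n-1.\<close>
definition R1 :: "nat \<Rightarrow> (nat \<Rightarrow> real) \<Rightarrow> nat \<Rightarrow> nat \<Rightarrow> real" where
  "R1 n \<alpha> j l = (if even j then 0 else if l mod n = 0 then 0 else \<alpha> (l mod n))"

definition R2 :: "nat \<Rightarrow> (nat \<Rightarrow> real) \<Rightarrow> nat \<Rightarrow> nat \<Rightarrow> real" where
  "R2 n \<beta> j l = R1 n \<beta> l j"

end

theory Submission
  imports Defs "HOL-Analysis.Analysis"
begin

text \<open>Let w be a primitive d-th root of unity, d = 2n with n even, and let the phase of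
  entry (j, l) be [j odd] a(l) + [l odd] b(j) with a, b n-periodic; both matrices of the
  theorem are of this form. The inner product of columns l \<noteq> l' is \<Sum>j r^j X(j) with
  r = w^(l - l') a d-th root of unity other than 1. If l and l' have different parity, then
  r^n = -1 while X is n-periodic, so the terms j and j + n cancel. If they have the same
  parity, X(j) depends only on the parity of j and the sum factors as
  (\<Sum>m<n. r^(2m)) (1 + r X(1)); the geometric sum vanishes unless r = -1, that is
  l' = l \<plusminus> n, and then X(1) = 1 by periodicity of a.\<close>

definition unit_root :: "nat \<Rightarrow> complex" where
  "unit_root d = exp (2 * pi * \<i> / of_nat d)"

lemma norm_unit_root [simp]: "norm (unit_root d) = 1"
  by (simp add: unit_root_def norm_exp_eq_Re)

lemma unit_root_power_eq_iff:
  assumes "d > 0"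
  shows "unit_root d ^ a = unit_root d ^ b \<longleftrightarrow> a mod d = b mod d"
proof -
  have "unit_root d ^ m = exp (2 * of_real pi * \<i> * of_nat m / of_nat d)" for m
    by (simp add: unit_root_def mult_ac flip: exp_of_nat_mult)
  then show ?thesis
    using complex_root_unity_eq[of d a b] assms by simp
qed

lemma unit_root_power_self [simp]: "unit_root d ^ d = 1"
  using unit_root_power_eq_iff[of d d 0] by (cases "d = 0") auto

lemma unit_root_power_half:
  assumes "n > 0"
  shows "unit_root (2 * n) ^ n = -1"
proof -
  have "unit_root (2 * n) ^ n = exp (of_nat n * (2 * pi * \<i> / of_nat (2 * n)))"
    by (simp add: unit_root_def flip: exp_of_nat_mult)
  also have "of_nat n * (2 * pi * \<i> / of_nat (2 * n)) = pi * \<i>"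
    using assms by (simp add: field_simps)
  finally show ?thesis by simp
qed

lemma fourier_matrix_unit_root: "fourier_matrix d j l = unit_root d ^ (j * l)"
  by (simp add: fourier_matrix_def unit_root_def)

lemma mult_cnj_eq_1_iff_norm: "z * cnj z = 1 \<longleftrightarrow> norm z = 1"
proof -
  have "z * cnj z = 1 \<longleftrightarrow> (norm z)\<^sup>2 = 1"
    by (metis complex_norm_square of_real_eq_1_iff)
  then show ?thesis
    using norm_ge_zero[of z] by (auto simp: power2_eq_1_iff)
qed

lemma exp_i_mult_cnj:
  "exp (\<i> * of_real x) * cnj (exp (\<i> * of_real y)) = exp (\<i> * of_real (x - y))"
  by (simp add: exp_cnj algebra_simps flip: exp_add)

lemma periodic_eq_mod:
  fixes f :: "nat \<Rightarrow> 'a"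
  assumes "\<And>x. f (x + n) = f x"
  shows "f x = f (x mod n)"
proof -
  have "f (y + n * q) = f y" for y q
    by (induction q arbitrary: y) (simp_all add: assms add.assoc[symmetric])
  then show ?thesis
    by (metis mod_mult_div_eq)
qed

lemma sum_lessThan_double_halves:
  fixes f :: "nat \<Rightarrow> 'a::comm_monoid_add"
  shows "(\<Sum>j<2 * n. f j) = (\<Sum>j<n. f j + f (j + n))"
proof -
  have "(\<Sum>j<2 * n. f j) = (\<Sum>j<n. f j) + (\<Sum>j\<in>{0 + n..<n + n}. f j)"
    by (simp add: mult_2 sum.atLeastLessThan_concat flip: atLeast0LessThan)
  also have "(\<Sum>j\<in>{0 + n..<n + n}. f j) = (\<Sum>j<n. f (j + n))"
    by (simp only: sum.shift_bounds_nat_ivl atLeast0LessThan)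
  finally show ?thesis
    by (simp only: sum.distrib)
qed

lemma sum_lessThan_double_pairs:
  fixes f :: "nat \<Rightarrow> 'a::comm_monoid_add"
  shows "(\<Sum>j<2 * n. f j) = (\<Sum>m<n. f (2 * m) + f (2 * m + 1))"
  by (induction n) (simp_all add: ac_simps)

lemma sum_power_mult_periodic_eq_0:
  fixes z :: "'a::comm_ring_1"
  assumes "z ^ n = -1" and "\<And>j. X (j + n) = X j"
  shows "(\<Sum>j<2 * n. z ^ j * X j) = 0"
  by (simp add: sum_lessThan_double_halves power_add assms)

lemma sum_power_mult_parity_eq_0:
  fixes z e :: "'a::field"
  assumes "z ^ (2 * n) = 1" and "z \<noteq> 1" and "z = -1 \<Longrightarrow> e = 1"
  shows "(\<Sum>j<2 * n. z ^ j * (if odd j then e else 1)) = 0"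
proof -
  have "(\<Sum>j<2 * n. z ^ j * (if odd j then e else 1)) = (\<Sum>m<n. (z\<^sup>2) ^ m) * (1 + z * e)"
    by (simp add: sum_lessThan_double_pairs sum_distrib_left sum_distrib_right power_mult
        flip: sum.distrib) (simp add: algebra_simps)
  also have "\<dots> = 0"
  proof (cases "z\<^sup>2 = 1")
    case True
    then have "z = -1"
      using \<open>z \<noteq> 1\<close> by (simp add: power2_eq_1_iff)
    then show ?thesis using assms(3) by simp
  next
    case False
    then show ?thesis
      using assms(1) by (simp add: geometric_sum power_mult)
  qed
  finally show ?thesis .
qed

lemma complex_hadamard_fourier_parity_phases:
  fixes a b :: "nat \<Rightarrow> real"
  assumes "n > 0" and "even n" and a_periodic: "\<And>x. a (x + n) = a x"
    and b_periodic: "\<And>x. b (x + n) = b x"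
  shows "complex_hadamard (2 * n) (\<lambda>j l. fourier_matrix (2 * n) j l *
           exp (\<i> * of_real ((if odd j then a l else 0) + (if odd l then b j else 0))))"
proof -
  define w where "w = unit_root (2 * n)"
  define \<phi> where "\<phi> j l = (if odd j then a l else 0) + (if odd l then b j else 0)" for j l
  have w_unit: "w ^ m * cnj (w ^ m) = 1" for m
    by (subst mult_cnj_eq_1_iff_norm) (simp add: norm_power w_def)
  have orth: "(\<Sum>j<2 * n. w ^ (j * l) * exp (\<i> * of_real (\<phi> j l)) *
                 cnj (w ^ (j * l') * exp (\<i> * of_real (\<phi> j l')))) = 0"
    if "l < 2 * n" and "l' < 2 * n" and "l \<noteq> l'" for l l'
  proof -
    define r where "r = w ^ l * cnj (w ^ l')"
    define X where "X j = exp (\<i> * of_real (\<phi> j l)) * cnj (exp (\<i> * of_real (\<phi> j l')))" for j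
    have X_eq: "X j = exp (\<i> * of_real (\<phi> j l - \<phi> j l'))" for j
      by (simp only: X_def exp_i_mult_cnj)
    have summand: "w ^ (j * l) * exp (\<i> * of_real (\<phi> j l)) *
        cnj (w ^ (j * l') * exp (\<i> * of_real (\<phi> j l'))) = r ^ j * X j" for j
      by (simp add: r_def X_def power_mult_distrib mult_ac flip: power_mult)
    have r_power: "r ^ m = (w ^ m) ^ l * cnj ((w ^ m) ^ l')" for m
      by (simp add: r_def power_mult_distrib mult.commute flip: power_mult)
    have r_root: "r ^ (2 * n) = 1"
      by (simp add: r_power w_def)
    have r_shift: "r * w ^ l' = w ^ l"
      using w_unit[of l'] by (simp add: r_def mult_ac)
    have "(\<Sum>j<2 * n. r ^ j * X j) = 0"
    proof (cases "odd l = odd l'")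
      case True
      have "r \<noteq> 1"
      proof
        assume "r = 1"
        then have "l mod (2 * n) = l' mod (2 * n)"
          using r_shift \<open>n > 0\<close> by (simp add: w_def unit_root_power_eq_iff)
        with that show False by simp
      qed
      moreover have "exp (\<i> * of_real (a l - a l')) = 1" if "r = -1"
      proof -
        have "w ^ l = w ^ (n + l')"
          using r_shift \<open>n > 0\<close> by (simp add: \<open>r = -1\<close> power_add w_def unit_root_power_half)
        then have "l mod (2 * n) = (n + l') mod (2 * n)"
          using \<open>n > 0\<close> by (simp add: w_def unit_root_power_eq_iff)
        then have "l mod n = l' mod n"
          by (metis mod_add_self1 mod_mod_cancel dvd_triv_right mult.commute)
        then have "a l = a l'"
          using periodic_eq_mod[of a n, OF a_periodic] by metis
        then show ?thesis by simp
      qed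
      moreover have "X j = (if odd j then exp (\<i> * of_real (a l - a l')) else 1)" for j
        using True by (simp add: X_eq \<phi>_def)
      ultimately show ?thesis
        using sum_power_mult_parity_eq_0[OF r_root] by simp
    next
      case False
      have "r ^ n = -1"
        using False \<open>n > 0\<close> by (simp add: r_power w_def unit_root_power_half minus_one_power_iff)
      moreover have "X (j + n) = X j" for j
        using \<open>even n\<close> by (simp add: X_eq \<phi>_def b_periodic)
      ultimately show ?thesis
        by (rule sum_power_mult_periodic_eq_0)
    qed
    then show ?thesis
      by (simp only: summand)
  qed
  show ?thesis
    unfolding complex_hadamard_def fourier_matrix_unit_root
    using orth by (simp add: norm_mult norm_power norm_exp_eq_Re w_def \<phi>_def)
qed

lemma R1_periodic: "R1 n \<alpha> j (l + n) = R1 n \<alpha> j l"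
  by (simp add: R1_def)

lemma R1_add_transpose_parity:
  "R1 n \<gamma> j l + R1 n \<delta> l j =
     (if odd j then R1 n \<gamma> 1 l else 0) + (if odd l then R1 n \<delta> 1 j else 0)"
  by (simp add: R1_def)

theorem mainTheorem11:
  fixes k :: nat and \<alpha> \<beta> :: "nat \<Rightarrow> real"
  assumes "k > 1"
  shows "complex_hadamard (4 * k)
           (\<lambda>j l. fourier_matrix (4 * k) j l *
                  exp (\<i> * of_real (R1 (2 * k) \<alpha> j l + R2 (2 * k) \<beta> j l)))
       \<and> complex_hadamard (4 * k)
           (\<lambda>j l. fourier_matrix (4 * k) j l *
                  exp (\<i> * of_real (R1 (2 * k) \<alpha> l j + R2 (2 * k) \<beta> l j)))"
proof -
  have hadamard: "complex_hadamard (2 * (2 * k))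
      (\<lambda>j l. fourier_matrix (2 * (2 * k)) j l *
             exp (\<i> * of_real (R1 (2 * k) \<gamma> j l + R1 (2 * k) \<delta> l j)))" for \<gamma> \<delta>
    unfolding R1_add_transpose_parity
    using assms by (intro complex_hadamard_fourier_parity_phases) (simp_all add: R1_periodic)
  show ?thesis
    using hadamard[of \<alpha> \<beta>] hadamard[of \<beta> \<alpha>] by (simp add: R2_def add.commute)
qed

end
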